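(* Let $w$ be a word over $\{L,R\}$ and let $u\in\mathcal{L}_w$. Then $u$ is derivable from $w$, i.e. $u$ is a tail of a word obtained from $w$ by finitely many applications of the reduction rules (1), (1'), (2), (2').
   Context: Words are finite strings (including the empty word) over $\{L,R\}$; $|w|$ is the length. A tail of $w$ is any word $v'$ with $w=vv'$ for some word $v$. A word $u$ is derivable from $w$ if it is obtained from $w$ by finitely many successive applications (in any order) of the following rules, where $v,v'$ denote arbitrary words: (1) $vRRv'\Rightarrow vRv'$; (1') $vLLv'\Rightarrow vLv'$; (2) $vLRv'\Rightarrow vv'$; (2') $vRLv'\Rightarrow vv'$ (rules of reduction); (3) $vv'\Rightarrow v'$ (tail formation). For a set $\mathcal{S}$ of words, $\mathcal{S}^L$ (resp. $\mathcal{S}^R$) is the set of words in $\mathcal{S}$ starting with $L$ (resp. $R$), and $L(\mathcal{S})=\{Ls: s\in\mathcal{S}\}$, $R(\mathcal{S})=\{Rs:s\in\mathcal{S}\}$. The language $\mathcal{L}_w$ is defined recursively: if $|w|\le 2$, $\mathcal{L}_w$ is the set of tails of $w$; if $|w|>2$, then $\mathcal{L}_w=\mathcal{L}_{Rw'}\cup L(\mathcal{L}^R_{Rw'})$ when $w=LRw'$; $\mathcal{L}_w=\mathcal{L}_{LLw'}\cup L(\mathcal{L}^L_{LLw'})$ when $w=LLLw'$; $\mathcal{L}_w=\mathcal{L}_{LRw'}\cup L(\mathcal{L}_{LRw'})$ when $w=LLRw'$; and dually (interchanging the letters $L$ and $R$ everywhere) when $w$ starts with $R$. *)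

theory Defs
  imports Main
begin

datatype letter = L | R

type_synonym word = "letter list"

definition tails :: "word \<Rightarrow> word set" where
  "tails w = {v'. \<exists>v. w = v @ v'}"

inductive reduce_step :: "word \<Rightarrow> word \<Rightarrow> bool" where
  r1:  "reduce_step (v @ [R, R] @ v') (v @ [R] @ v')"
| r1': "reduce_step (v @ [L, L] @ v') (v @ [L] @ v')"
| r2:  "reduce_step (v @ [L, R] @ v') (v @ v')"
| r2': "reduce_step (v @ [R, L] @ v') (v @ v')"

inductive deriv_step :: "word \<Rightarrow> word \<Rightarrow> bool" where
  red:  "reduce_step w u \<Longrightarrow> deriv_step w u"
| tail: "deriv_step (v @ v') v'"

definition derivable :: "word \<Rightarrow> word \<Rightarrow> bool" where
  "derivable w u \<longleftrightarrow> deriv_step\<^sup>*\<^sup>* w u"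

definition startL :: "word set \<Rightarrow> word set" where
  "startL S = {s \<in> S. \<exists>t. s = L # t}"

definition startR :: "word set \<Rightarrow> word set" where
  "startR S = {s \<in> S. \<exists>t. s = R # t}"

definition prefL :: "word set \<Rightarrow> word set" where
  "prefL S = (\<lambda>s. L # s) ` S"

definition prefR :: "word set \<Rightarrow> word set" where
  "prefR S = (\<lambda>s. R # s) ` S"

function lang :: "word \<Rightarrow> word set" where
  "length w \<le> 2 \<Longrightarrow> lang w = tails w"
| "w' \<noteq> [] \<Longrightarrow> lang (L # R # w') = lang (R # w') \<union> prefL (startR (lang (R # w')))"
| "lang (L # L # L # w') = lang (L # L # w') \<union> prefL (startL (lang (L # L # w')))"
| "lang (L # L # R # w') = lang (L # R # w') \<union> prefL (lang (L # R # w'))"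
| "w' \<noteq> [] \<Longrightarrow> lang (R # L # w') = lang (L # w') \<union> prefR (startL (lang (L # w')))"
| "lang (R # R # R # w') = lang (R # R # w') \<union> prefR (startR (lang (R # R # w')))"
| "lang (R # R # L # w') = lang (R # L # w') \<union> prefR (lang (R # L # w'))"
proof -
  fix P and x :: word
  assume a1: "\<And>w. length w \<le> 2 \<Longrightarrow> x = w \<Longrightarrow> P"
    and a2: "\<And>w'. w' \<noteq> [] \<Longrightarrow> x = L # R # w' \<Longrightarrow> P"
    and a3: "\<And>w'. x = L # L # L # w' \<Longrightarrow> P"
    and a4: "\<And>w'. x = L # L # R # w' \<Longrightarrow> P"
    and a5: "\<And>w'. w' \<noteq> [] \<Longrightarrow> x = R # L # w' \<Longrightarrow> P"
    and a6: "\<And>w'. x = R # R # R # w' \<Longrightarrow> P"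
    and a7: "\<And>w'. x = R # R # L # w' \<Longrightarrow> P"
  show P
  proof (cases "length x \<le> 2")
    case True then show ?thesis using a1 by blast
  next
    case False
    then obtain a b c w' where x: "x = a # b # c # w'"
      by (metis Suc_le_length_iff numeral_2_eq_2 not_less_eq_eq)
    show ?thesis
      using a2[of "c # w'"] a3[of w'] a4[of w'] a5[of "c # w'"] a6[of w'] a7[of w'] x
      by (cases a; cases b; cases c; cases w') auto
  qed
qed auto
termination by (relation "measure length") auto

end

theory Submission
  imports Defs
begin

text \<open>Instead of working with \<^const>\<open>derivable\<close> directly, we show by induction along the
recursion of \<^const>\<open>lang\<close> the more concrete fact that some tail of \<open>w\<close> reduces to \<open>u\<close>. The
induction step only needs that this relation survives prepending letters in the three shapes
occurring in the definition of \<^const>\<open>lang\<close>. That in turn rests on one observation: every word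
reduces to a word of length at most one, so whatever lies between two letters can be collapsed,
\<open>b y a t\<close> reducing to \<open>b a t\<close> if \<open>a \<noteq> b\<close> and \<open>a y a t\<close> reducing to \<open>a t\<close>.\<close>

lemma reduce_step_append:
  "reduce_step x x' \<Longrightarrow> reduce_step (p @ x @ q) (p @ x' @ q)"
proof (induction rule: reduce_step.induct)
  case (r1 v v') show ?case using reduce_step.r1[of "p @ v" "v' @ q"] by simp
next
  case (r1' v v') show ?case using reduce_step.r1'[of "p @ v" "v' @ q"] by simp
next
  case (r2 v v') show ?case using reduce_step.r2[of "p @ v" "v' @ q"] by simp
next
  case (r2' v v') show ?case using reduce_step.r2'[of "p @ v" "v' @ q"] by simp
qed

lemma reduces_append:
  "reduce_step\<^sup>*\<^sup>* x x' \<Longrightarrow> reduce_step\<^sup>*\<^sup>* (p @ x @ q) (p @ x' @ q)"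
  by (induction rule: rtranclp_induct) (auto intro: reduce_step_append rtranclp.rtrancl_into_rtrancl)

lemma reduce_step_same: "reduce_step (p @ x # x # q) (p @ x # q)"
  using reduce_step.r1[of p q] reduce_step.r1'[of p q] by (cases x) auto

lemma reduce_step_distinct: "x \<noteq> y \<Longrightarrow> reduce_step (p @ x # y # q) (p @ q)"
  using reduce_step.r2[of p q] reduce_step.r2'[of p q] by (cases x; cases y) auto

lemma reduces_to_Nil_or_letter: "reduce_step\<^sup>*\<^sup>* y [] \<or> (\<exists>x. reduce_step\<^sup>*\<^sup>* y [x])"
proof (induction y)
  case Nil
  show ?case by simp
next
  case (Cons a y)
  have reduces_Cons: "reduce_step\<^sup>*\<^sup>* (a # y) (a # c)" if "reduce_step\<^sup>*\<^sup>* y c" for c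
    using reduces_append[OF that, of "[a]" "[]"] by simp
  from Cons.IH show ?case
  proof (elim disjE exE)
    assume "reduce_step\<^sup>*\<^sup>* y []"
    then show ?case using reduces_Cons by blast
  next
    fix x
    assume "reduce_step\<^sup>*\<^sup>* y [x]"
    then have to_pair: "reduce_step\<^sup>*\<^sup>* (a # y) [a, x]"
      by (rule reduces_Cons)
    show ?case
    proof (cases "a = x")
      case True
      then have "reduce_step [a, x] [a]"
        using reduce_step_same[of "[]" a "[]"] by simp
      with to_pair have "reduce_step\<^sup>*\<^sup>* (a # y) [a]"
        by (rule rtranclp.rtrancl_into_rtrancl)
      then show ?thesis by blast
    next
      case False
      then have "reduce_step [a, x] []"
        using reduce_step_distinct[of a x "[]" "[]"] by simp
      with to_pair have "reduce_step\<^sup>*\<^sup>* (a # y) []"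
        by (rule rtranclp.rtrancl_into_rtrancl)
      then show ?thesis by blast
    qed
  qed
qed

lemma reduces_collapse_middle:
  assumes "reduce_step\<^sup>*\<^sup>* (p @ q) z" and "\<And>x. reduce_step\<^sup>*\<^sup>* (p @ x # q) z"
  shows "reduce_step\<^sup>*\<^sup>* (p @ y @ q) z"
  using reduces_to_Nil_or_letter[of y]
proof (elim disjE exE)
  assume "reduce_step\<^sup>*\<^sup>* y []"
  then show ?thesis
    using rtranclp_trans[OF reduces_append[of y "[]" p q, simplified] assms(1)] by blast
next
  fix x
  assume "reduce_step\<^sup>*\<^sup>* y [x]"
  then show ?thesis
    using rtranclp_trans[OF reduces_append[of y "[x]" p q, simplified] assms(2)] by blast
qed

lemma reduces_between_same: "reduce_step\<^sup>*\<^sup>* (a # y @ a # t) (a # t)"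
proof (rule reduces_collapse_middle[where p = "[a]", simplified])
  show "reduce_step\<^sup>*\<^sup>* (a # a # t) (a # t)"
    using reduce_step_same[of "[]" a t] by simp
  show "reduce_step\<^sup>*\<^sup>* (a # x # a # t) (a # t)" for x
  proof (cases "x = a")
    case True
    then show ?thesis
      using reduce_step_same[of "[]" a "a # t"] reduce_step_same[of "[]" a t]
      by (simp add: converse_rtranclp_into_rtranclp)
  next
    case False
    then show ?thesis
      using reduce_step_distinct[of a x "[]" "a # t"] by simp
  qed
qed

lemma reduces_between_distinct:
  assumes "a \<noteq> b"
  shows "reduce_step\<^sup>*\<^sup>* (b # y @ a # t) (b # a # t)"
proof (rule reduces_collapse_middle[where p = "[b]", simplified])
  show "reduce_step\<^sup>*\<^sup>* (b # a # t) (b # a # t)"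
    by simp
  show "reduce_step\<^sup>*\<^sup>* (b # x # a # t) (b # a # t)" for x
  proof (cases "x = b")
    case True
    then show ?thesis
      using reduce_step_same[of "[]" b "a # t"] by simp
  next
    case False
    with assms have "x = a"
      by (cases a; cases b; cases x) auto
    then show ?thesis
      using reduce_step_same[of "[b]" a t] by simp
  qed
qed

lemma reduces_double_to_singleton: "reduce_step\<^sup>*\<^sup>* (b # b # y) [b]"
proof (rule reduces_collapse_middle[where p = "[b, b]" and q = "[]", simplified])
  show "reduce_step\<^sup>*\<^sup>* [b, b] [b]"
    using reduce_step_same[of "[]" b "[]"] by simp
  show "reduce_step\<^sup>*\<^sup>* [b, b, x] [b]" for x
  proof (cases "x = b")
    case True
    then show ?thesis
      using reduce_step_same[of "[]" b "[b]"] reduce_step_same[of "[]" b "[]"]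
      by (simp add: converse_rtranclp_into_rtranclp)
  next
    case False
    then show ?thesis
      using reduce_step_distinct[of b x "[b]" "[]"] by simp
  qed
qed

definition tail_reduces_to :: "word \<Rightarrow> word \<Rightarrow> bool" where
  "tail_reduces_to w u \<longleftrightarrow> (\<exists>v v'. w = v @ v' \<and> reduce_step\<^sup>*\<^sup>* v' u)"

lemma tail_reduces_to_if_tail: "u \<in> tails w \<Longrightarrow> tail_reduces_to w u"
  by (auto simp: tails_def tail_reduces_to_def)

lemma tail_reduces_to_Cons: "tail_reduces_to w u \<Longrightarrow> tail_reduces_to (a # w) u"
  unfolding tail_reduces_to_def by (metis append_Cons)

lemma tail_reduces_to_Cons_distinct:
  assumes "tail_reduces_to w (a # t)" and "a \<noteq> b"
  shows "tail_reduces_to (b # w) (b # a # t)"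
proof -
  from assms(1) obtain v v' where "w = v @ v'" and "reduce_step\<^sup>*\<^sup>* v' (a # t)"
    unfolding tail_reduces_to_def by blast
  then have "reduce_step\<^sup>*\<^sup>* (b # w) (b # v @ a # t)"
    using reduces_append[of v' "a # t" "b # v" "[]"] by simp
  also have "reduce_step\<^sup>*\<^sup>* \<dots> (b # a # t)"
    using reduces_between_distinct[OF assms(2)] .
  finally show ?thesis
    unfolding tail_reduces_to_def by (metis append_Nil)
qed

lemma tail_reduces_to_Cons_same:
  assumes "tail_reduces_to (a # w) (a # t)"
  shows "tail_reduces_to (a # a # w) (a # a # t)"
proof -
  from assms obtain v v' where split: "a # w = v @ v'" and reduces: "reduce_step\<^sup>*\<^sup>* v' (a # t)"
    unfolding tail_reduces_to_def by blast
  have "reduce_step\<^sup>*\<^sup>* (a # a # w) (a # a # t)"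
  proof (cases v)
    case Nil
    then show ?thesis
      using split reduces_append[OF reduces, of "[a]" "[]"] by simp
  next
    case (Cons a' y)
    with split have "a # a # w = a # a # y @ v'"
      by simp
    also have "reduce_step\<^sup>*\<^sup>* \<dots> (a # a # y @ a # t)"
      using reduces_append[OF reduces, of "a # a # y" "[]"] by simp
    also have "reduce_step\<^sup>*\<^sup>* \<dots> (a # a # t)"
      using reduces_append[OF reduces_between_same[of a y t], of "[a]" "[]"] by simp
    finally show ?thesis .
  qed
  then show ?thesis
    unfolding tail_reduces_to_def by (metis append_Nil)
qed

lemma tail_reduces_to_double:
  assumes "tail_reduces_to (b # w) s"
  shows "tail_reduces_to (b # b # w) (b # s)"
proof (cases s)
  case Nil
  then show ?thesis
    using reduces_double_to_singleton[of b w] unfolding tail_reduces_to_def by (metis append_Nil)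
next
  case (Cons a t)
  then show ?thesis
    using assms tail_reduces_to_Cons_same tail_reduces_to_Cons_distinct by (cases "a = b") auto
qed

lemma derivable_if_tail_reduces_to:
  assumes "tail_reduces_to w u"
  shows "derivable w u"
proof -
  from assms obtain v v' where "w = v @ v'" and reduces: "reduce_step\<^sup>*\<^sup>* v' u"
    unfolding tail_reduces_to_def by blast
  have "deriv_step\<^sup>*\<^sup>* v' u"
    using reduces by (induction rule: rtranclp_induct) (auto intro: deriv_step.red rtranclp.rtrancl_into_rtrancl)
  with \<open>w = v @ v'\<close> show ?thesis
    unfolding derivable_def by (auto intro: converse_rtranclp_into_rtranclp deriv_step.tail)
qed

lemma tail_reduces_to_if_in_lang: "u \<in> lang w \<Longrightarrow> tail_reduces_to w u"
proof (induction w arbitrary: u rule: lang.induct)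
  case (1 w)
  then show ?case by (simp add: tail_reduces_to_if_tail)
next
  case (2 w')
  then show ?case
    by (auto simp: prefL_def startR_def intro: tail_reduces_to_Cons tail_reduces_to_Cons_distinct)
next
  case (3 w')
  then show ?case
    by (auto simp: prefL_def startL_def intro: tail_reduces_to_Cons tail_reduces_to_double)
next
  case (4 w')
  then show ?case
    by (auto simp: prefL_def intro: tail_reduces_to_Cons tail_reduces_to_double)
next
  case (5 w')
  then show ?case
    by (auto simp: prefR_def startL_def intro: tail_reduces_to_Cons tail_reduces_to_Cons_distinct)
next
  case (6 w')
  then show ?case
    by (auto simp: prefR_def startR_def intro: tail_reduces_to_Cons tail_reduces_to_double)
next
  case (7 w')
  then show ?case
    by (auto simp: prefR_def intro: tail_reduces_to_Cons tail_reduces_to_double)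
qed

theorem mainTheorem9:
  fixes w u :: word
  assumes "u \<in> lang w"
  shows "derivable w u"
  using assms by (intro derivable_if_tail_reduces_to tail_reduces_to_if_in_lang)

end
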